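(* Let $D\subset\mathbb R^d$ be a bounded $\kappa$-fat open set. There exist a constant $a\in(0,2^{-6}]$ depending only on $\phi$ and $d$, and a constant $C>0$, such that for every $x_0\in D$ and every $r\in(0,1)$ with $B(x_0,r)\subset D$, $$\mathbb E_x\,\tau_{B(x_0,r)}\ge\mathbb E_x\,\tau_{B(x_0,4ar)}\ge C\,\frac{1}{\psi(\Phi(r)^{-1})}\qquad\text{for all } x\in B(x_0,ar).$$
   Context: Setting. Let $d\ge 2$. Let $W$ be a Brownian motion in $\mathbb R^d$ with generator $\Delta$. Let $S$ be a subordinator independent of $W$ whose Laplace exponent $\phi$ is a complete Bernstein function with $\phi(1)=1$ such that there exist $a_1,a_2>0$, $0<\delta_1\le\delta_2<1$ with $a_1(R/s)^{\delta_1}\le \phi(R)/\phi(s)\le a_2(R/s)^{\delta_2}$ for all $1<s\le R<\infty$. Let $Z_t=W_{S_t}$. Let $T$ be a subordinator independent of $Z$ whose Laplace exponent $\psi$ is a complete Bernstein function with $\psi(1)=1$ such that there exist $b_1,b_2>0$, $0<\gamma_1\le\gamma_2<1$ with $b_1(R/s)^{\gamma_1}\le \psi(R)/\psi(s)\le b_2(R/s)^{\gamma_2}$ for all $1<s\le R<\infty$. For an open set $D$, $Z^D$ is $Z$ killed upon exiting $D$ and $Y^D_t:=Z^D_{T_t}$; for $U\subset D$, $\tau_U=\inf\{t>0:Y^D_t\notin U\}$. $\Phi(r):=1/\phi(r^{-2})$. For $0<\kappa<1$, $D$ is $\kappa$-fat if there is $R_1>0$ such that for all $x\in\overline D$ and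 $r\in(0,R_1]$ there is a ball $B(A_r(x),\kappa r)\subset D\cap B(x,r)$. *)

theory Defs
  imports "HOL-Probability.Probability"
begin

definition completely_monotone_on :: "real set \<Rightarrow> (real \<Rightarrow> real) \<Rightarrow> bool" where
  "completely_monotone_on I f \<longleftrightarrow>
     (\<exists>g :: nat \<Rightarrow> real \<Rightarrow> real.
        (\<forall>x\<in>I. g 0 x = f x) \<and>
        (\<forall>n. \<forall>x\<in>I. (g n has_real_derivative g (Suc n) x) (at x)) \<and>
        (\<forall>n. \<forall>x\<in>I. (-1) ^ n * g n x \<ge> 0))"

definition complete_bernstein :: "(real \<Rightarrow> real) \<Rightarrow> bool" where
  "complete_bernstein \<phi> \<longleftrightarrow>
     (\<exists>a b m. a \<ge> 0 \<and> b \<ge> 0 \<and> completely_monotone_on {0<..} m \<and>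
        (\<integral>\<^sup>+ t\<in>{0<..}. ennreal (min 1 t * m t) \<partial>lborel) < \<infinity> \<and>
        (\<forall>l>0. ennreal (\<phi> l) =
            ennreal a + ennreal (b * l) +
            (\<integral>\<^sup>+ t\<in>{0<..}. ennreal ((1 - exp (- l * t)) * m t) \<partial>lborel)))"

definition wsc :: "(real \<Rightarrow> real) \<Rightarrow> real \<Rightarrow> real \<Rightarrow> real \<Rightarrow> real \<Rightarrow> bool" where
  "wsc \<phi> a1 a2 d1 d2 \<longleftrightarrow> 0 < a1 \<and> 0 < a2 \<and> 0 < d1 \<and> d1 \<le> d2 \<and> d2 < 1 \<and>
     (\<forall>s R. 1 < s \<longrightarrow> s \<le> R \<longrightarrow>
        a1 * (R / s) powr d1 \<le> \<phi> R / \<phi> s \<and> \<phi> R / \<phi> s \<le> a2 * (R / s) powr d2)"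

definition Phi :: "(real \<Rightarrow> real) \<Rightarrow> real \<Rightarrow> real" where
  "Phi \<phi> r = 1 / \<phi> (r powr (-2))"

definition indep_increments :: "'w measure \<Rightarrow> (real \<Rightarrow> 'w \<Rightarrow> 'b::real_normed_vector) \<Rightarrow> bool" where
  "indep_increments M X \<longleftrightarrow>
     (\<forall>(t::nat \<Rightarrow> real) n. 0 \<le> t 0 \<and> (\<forall>i<n. t i < t (Suc i)) \<longrightarrow>
        prob_space.indep_vars M (\<lambda>_. borel) (\<lambda>i \<omega>. X (t (Suc i)) \<omega> - X (t i) \<omega>) {..<n})"

text \<open>Gaussian kernel of Brownian motion with generator the Laplacian (covariance 2t I).\<close>
definition heat_kernel :: "real \<Rightarrow> 'a::euclidean_space \<Rightarrow> real" where
  "heat_kernel t y = (4 * pi * t) powr (- real DIM('a) / 2) * exp (- (norm y)\<^sup>2 / (4 * t))"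

definition brownian_motion :: "'w measure \<Rightarrow> (real \<Rightarrow> 'w \<Rightarrow> 'a::euclidean_space) \<Rightarrow> bool" where
  "brownian_motion M W \<longleftrightarrow> prob_space M \<and>
     (\<forall>t. W t \<in> borel_measurable M) \<and>
     (\<forall>\<omega>\<in>space M. W 0 \<omega> = 0 \<and> continuous_on {0..} (\<lambda>t. W t \<omega>)) \<and>
     indep_increments M W \<and>
     (\<forall>s t. 0 \<le> s \<longrightarrow> s < t \<longrightarrow>
        distr M lborel (\<lambda>\<omega>. W t \<omega> - W s \<omega>) = density lborel (\<lambda>y. ennreal (heat_kernel (t - s) y)))"

definition subordinator :: "'w measure \<Rightarrow> (real \<Rightarrow> 'w \<Rightarrow> real) \<Rightarrow> (real \<Rightarrow> real) \<Rightarrow> bool" where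
  "subordinator M S \<phi> \<longleftrightarrow> prob_space M \<and>
     (\<forall>t. S t \<in> borel_measurable M) \<and>
     (\<forall>\<omega>\<in>space M. S 0 \<omega> = 0 \<and> mono_on {0..} (\<lambda>t. S t \<omega>) \<and>
        (\<forall>t\<ge>0. continuous (at_right t) (\<lambda>s. S s \<omega>))) \<and>
     indep_increments M S \<and>
     (\<forall>s t l. 0 \<le> s \<longrightarrow> s \<le> t \<longrightarrow> 0 < l \<longrightarrow>
        (\<integral>\<omega>. exp (- l * (S t \<omega> - S s \<omega>)) \<partial>M) = exp (- (t - s) * \<phi> l))"

abbreviation path_space :: "('a::topological_space) measure \<Rightarrow> (real \<Rightarrow> 'a) measure" where
  "path_space N \<equiv> Pi\<^sub>M UNIV (\<lambda>_. N)"

definition indep_rv :: "'w measure \<Rightarrow> 'b measure \<Rightarrow> ('w \<Rightarrow> 'b) \<Rightarrow> 'c measure \<Rightarrow> ('w \<Rightarrow> 'c) \<Rightarrow> bool" where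
  "indep_rv M Ma X Mb Y \<longleftrightarrow> X \<in> measurable M Ma \<and> Y \<in> measurable M Mb \<and>
     (\<forall>A\<in>sets Ma. \<forall>B\<in>sets Mb.
        measure M (X -` A \<inter> Y -` B \<inter> space M) =
        measure M (X -` A \<inter> space M) * measure M (Y -` B \<inter> space M))"

text \<open>Exit time from U of a path with cemetery None (None is never in U); the infimum of the
  empty set is infinity.\<close>
definition exit_time :: "(real \<Rightarrow> 'a option) \<Rightarrow> 'a set \<Rightarrow> ennreal" where
  "exit_time p U = (INF t\<in>{t. 0 < t \<and> (case p t of None \<Rightarrow> True | Some y \<Rightarrow> y \<notin> U)}. ennreal t)"

definition killed :: "'a set \<Rightarrow> (real \<Rightarrow> 'a) \<Rightarrow> real \<Rightarrow> 'a option" where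
  "killed D f t = (if ennreal t < exit_time (\<lambda>s. Some (f s)) D then Some (f t) else None)"

text \<open>Y^D started at x: Y^D_t = Z^D_{T_t}, where Z_t = x + W_{S_t}.\<close>
definition YD :: "(real \<Rightarrow> 'w \<Rightarrow> 'a::real_normed_vector) \<Rightarrow> (real \<Rightarrow> 'w \<Rightarrow> real) \<Rightarrow>
     (real \<Rightarrow> 'w \<Rightarrow> real) \<Rightarrow> 'a set \<Rightarrow> 'a \<Rightarrow> 'w \<Rightarrow> real \<Rightarrow> 'a option" where
  "YD W S T D x \<omega> t = killed D (\<lambda>s. x + W (S s \<omega>) \<omega>) (T t \<omega>)"

definition Etau :: "'w measure \<Rightarrow> (real \<Rightarrow> 'w \<Rightarrow> 'a::real_normed_vector) \<Rightarrow> (real \<Rightarrow> 'w \<Rightarrow> real) \<Rightarrow>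
     (real \<Rightarrow> 'w \<Rightarrow> real) \<Rightarrow> 'a set \<Rightarrow> 'a set \<Rightarrow> 'a \<Rightarrow> ennreal" where
  "Etau M W S T D U x = (\<integral>\<^sup>+ \<omega>. exit_time (YD W S T D x \<omega>) U \<partial>M)"

definition sub_setting :: "'w measure \<Rightarrow> (real \<Rightarrow> 'w \<Rightarrow> 'a::euclidean_space) \<Rightarrow> (real \<Rightarrow> 'w \<Rightarrow> real) \<Rightarrow>
     (real \<Rightarrow> 'w \<Rightarrow> real) \<Rightarrow> (real \<Rightarrow> real) \<Rightarrow> (real \<Rightarrow> real) \<Rightarrow> bool" where
  "sub_setting M W S T \<phi> \<psi> \<longleftrightarrow>
     brownian_motion M W \<and> subordinator M S \<phi> \<and> subordinator M T \<psi> \<and>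
     indep_rv M (path_space borel) (\<lambda>\<omega> t. W t \<omega>) (path_space borel) (\<lambda>\<omega> t. S t \<omega>) \<and>
     indep_rv M (path_space borel) (\<lambda>\<omega> t. W (S t \<omega>) \<omega>) (path_space borel) (\<lambda>\<omega> t. T t \<omega>) \<and>
     complete_bernstein \<psi> \<and> \<psi> 1 = 1 \<and> (\<exists>b1 b2 g1 g2. wsc \<psi> b1 b2 g1 g2)"

definition kappa_fat :: "real \<Rightarrow> 'a::euclidean_space set \<Rightarrow> bool" where
  "kappa_fat \<kappa> D \<longleftrightarrow> 0 < \<kappa> \<and> \<kappa> < 1 \<and>
     (\<exists>R1>0. \<forall>x\<in>closure D. \<forall>r. 0 < r \<and> r \<le> R1 \<longrightarrow>
        (\<exists>A. ball A (\<kappa> * r) \<subseteq> D \<inter> ball x r))"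

end

theory Submission
  imports Defs
begin

text \<open>
  Up to time t the process stays in B(x0, 4ar) if
  (i) the Brownian path moves less than 2ar up to time h = (ar/R)^2,
  (ii) the subordinator S has not reached h by time s = 1/(20 phi(1/h)), and
  (iii) T has not reached s by time t = 1/(20 psi(1/s)).
  Ottaviani's maximal inequality on dyadic times together with path continuity bounds the failure
  of (i) by 1/9, once R is chosen so that the standard Gaussian puts mass at most 1/10 outside the
  ball of radius R; the Laplace transform bounds P(S_s >= h) <= 2 s phi(1/h) = 1/10 and likewise
  for (iii). Hence E_x tau >= t/2, and weak scaling of phi and psi compares t with
  1/psi(phi(r^-2)) = 1/psi(Phi(r)^-1) up to a constant. The comparison of the two exit times is
  monotonicity of exit times in the set.
\<close>

section \<open>Ottaviani's maximal inequality\<close>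

definition first_passage :: "real \<Rightarrow> (nat \<Rightarrow> real) \<Rightarrow> nat \<Rightarrow> bool" where
  "first_passage c f k \<longleftrightarrow> c \<le> f k \<and> (\<forall>j\<in>{..<k}. f j < c)"

lemma ex_first_passage: "(\<exists>k\<le>n. c \<le> f k) \<longleftrightarrow> (\<exists>k\<le>n. first_passage c f k)"
proof
  assume "\<exists>k\<le>n. c \<le> f k"
  then obtain k where k: "k \<le> n" "c \<le> f k" by blast
  define m where "m = (LEAST m. c \<le> f m)"
  have "first_passage c f m"
    unfolding first_passage_def m_def using k(2) by (auto intro: LeastI dest: not_less_Least)
  moreover have "m \<le> n" unfolding m_def using k by (meson Least_le order.trans)
  ultimately show "\<exists>k\<le>n. first_passage c f k" by blast
qed (auto simp: first_passage_def)

lemma first_passage_unique: "first_passage c f k \<Longrightarrow> first_passage c f m \<Longrightarrow> k = m"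
  unfolding first_passage_def by (metis lessThan_iff linorder_neqE_nat not_le)

lemma first_passage_cong: "(\<And>j. j \<le> k \<Longrightarrow> f j = g j) \<Longrightarrow> first_passage c f k = first_passage c g k"
  unfolding first_passage_def by auto

lemma (in prob_space) indep_vars_prefix_suffix:
  fixes X :: "nat \<Rightarrow> 'a \<Rightarrow> 'b::topological_space"
  assumes ind: "indep_vars (\<lambda>_. borel) X {..<n}" and "k \<le> n"
    and P: "P \<in> PiM {..<k} (\<lambda>_. borel) \<rightarrow>\<^sub>M count_space UNIV"
    and Q: "Q \<in> PiM {k..<n} (\<lambda>_. borel) \<rightarrow>\<^sub>M count_space UNIV"
  shows "prob {\<omega>\<in>space M. P (\<lambda>i\<in>{..<k}. X i \<omega>) \<and> Q (\<lambda>i\<in>{k..<n}. X i \<omega>)}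
       = prob {\<omega>\<in>space M. P (\<lambda>i\<in>{..<k}. X i \<omega>)} * prob {\<omega>\<in>space M. Q (\<lambda>i\<in>{k..<n}. X i \<omega>)}"
proof -
  have indep: "indep_var (PiM {..<k} (\<lambda>_. borel)) (\<lambda>\<omega>. \<lambda>i\<in>{..<k}. X i \<omega>)
                  (PiM {k..<n} (\<lambda>_. borel)) (\<lambda>\<omega>. \<lambda>i\<in>{k..<n}. X i \<omega>)"
    using \<open>k \<le> n\<close> by (intro indep_var_restrict[OF ind]) auto
  have "indep_var (count_space UNIV) (P \<circ> (\<lambda>\<omega>. \<lambda>i\<in>{..<k}. X i \<omega>))
                       (count_space UNIV) (Q \<circ> (\<lambda>\<omega>. \<lambda>i\<in>{k..<n}. X i \<omega>))"
    by (rule indep_var_compose[OF indep P Q])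
  from indep_varD[OF this, of "{True}" "{True}"] show ?thesis
    by (simp add: vimage_def Int_def conj_commute)
qed

lemma (in prob_space) indep_first_passage_tail:
  fixes X :: "nat \<Rightarrow> 'a \<Rightarrow> 'v::euclidean_space"
  assumes ind: "indep_vars (\<lambda>_. borel) X {..<n}" and "k \<le> n"
  shows "prob {\<omega>\<in>space M. first_passage c (\<lambda>j. norm (\<Sum>i<j. X i \<omega>)) k \<and> norm (\<Sum>i\<in>{k..<n}. X i \<omega>) < lam}
       = prob {\<omega>\<in>space M. first_passage c (\<lambda>j. norm (\<Sum>i<j. X i \<omega>)) k}
         * prob {\<omega>\<in>space M. norm (\<Sum>i\<in>{k..<n}. X i \<omega>) < lam}"
proof -
  let ?P = "\<lambda>x. first_passage c (\<lambda>j. norm (\<Sum>i<j. x i)) k"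
  let ?Q = "\<lambda>x. norm (\<Sum>i\<in>{k..<n}. x i) < lam"
  have "?P (\<lambda>i\<in>{..<k}. X i \<omega>) = first_passage c (\<lambda>j. norm (\<Sum>i<j. X i \<omega>)) k" for \<omega>
    by (auto cong: first_passage_cong)
  moreover have "?Q (\<lambda>i\<in>{k..<n}. X i \<omega>) = (norm (\<Sum>i\<in>{k..<n}. X i \<omega>) < lam)" for \<omega>
    by simp
  moreover have "prob {\<omega>\<in>space M. ?P (\<lambda>i\<in>{..<k}. X i \<omega>) \<and> ?Q (\<lambda>i\<in>{k..<n}. X i \<omega>)}
      = prob {\<omega>\<in>space M. ?P (\<lambda>i\<in>{..<k}. X i \<omega>)} * prob {\<omega>\<in>space M. ?Q (\<lambda>i\<in>{k..<n}. X i \<omega>)}"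
    by (rule indep_vars_prefix_suffix[OF ind \<open>k \<le> n\<close>]) (unfold first_passage_def, measurable)
  ultimately show ?thesis
    by simp
qed

lemma (in prob_space) prob_disjoint_union_indep_ge:
  assumes "finite I" and "A ` I \<subseteq> events" and "B ` I \<subseteq> events" and "disjoint_family_on A I"
    and "\<And>i. i \<in> I \<Longrightarrow> 1 - \<beta> \<le> prob (B i)"
    and "\<And>i. i \<in> I \<Longrightarrow> prob (A i \<inter> B i) = prob (A i) * prob (B i)"
  shows "(1 - \<beta>) * prob (\<Union>i\<in>I. A i) \<le> prob (\<Union>i\<in>I. A i \<inter> B i)"
proof -
  have "(1 - \<beta>) * prob (\<Union>i\<in>I. A i) = (\<Sum>i\<in>I. (1 - \<beta>) * prob (A i))"
    using assms by (subst finite_measure_finite_Union) (auto simp: sum_distrib_left)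
  also have "\<dots> \<le> (\<Sum>i\<in>I. prob (A i \<inter> B i))"
    using assms(5,6) by (intro sum_mono) (metis measure_nonneg mult.commute mult_left_mono)
  also have "\<dots> = prob (\<Union>i\<in>I. A i \<inter> B i)"
    using assms by (subst finite_measure_finite_Union) (auto simp: disjoint_family_on_def, blast)
  finally show ?thesis .
qed

lemma (in prob_space) ottaviani:
  fixes X :: "nat \<Rightarrow> 'a \<Rightarrow> 'v::euclidean_space"
  assumes ind: "indep_vars (\<lambda>_. borel) X {..<n}"
    and lam: "0 < lam" and \<beta>: "0 \<le> \<beta>"
    and tail: "\<And>k. k < n \<Longrightarrow> prob {\<omega>\<in>space M. lam \<le> norm (\<Sum>i\<in>{k..<n}. X i \<omega>)} \<le> \<beta>"
  shows "(1 - \<beta>) * prob {\<omega>\<in>space M. \<exists>k\<le>n. 2*lam \<le> norm (\<Sum>i<k. X i \<omega>)}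
         \<le> prob {\<omega>\<in>space M. lam \<le> norm (\<Sum>i<n. X i \<omega>)}"
proof -
  have X[measurable]: "X i \<in> borel_measurable M" if "i < n" for i
    using ind that by (auto simp: indep_vars_def)
  define A where "A k = {\<omega>\<in>space M. first_passage (2*lam) (\<lambda>j. norm (\<Sum>i<j. X i \<omega>)) k}" for k
  define B where "B k = {\<omega>\<in>space M. norm (\<Sum>i\<in>{k..<n}. X i \<omega>) < lam}" for k
  have A_ev: "A k \<in> events" if "k \<le> n" for k
  proof -
    have [measurable]: "X i \<in> borel_measurable M" if "i < k" for i
      using X that \<open>k \<le> n\<close> by simp
    show ?thesis unfolding A_def first_passage_def by measurable
  qed
  have B_ev: "B k \<in> events" if "k \<le> n" for k
    using that unfolding B_def by measurable
  have union: "{\<omega>\<in>space M. \<exists>k\<le>n. 2*lam \<le> norm (\<Sum>i<k. X i \<omega>)} = (\<Union>k\<le>n. A k)"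
    unfolding A_def using ex_first_passage[of n "2*lam"] by auto
  have disj: "disjoint_family_on A {..n}"
    unfolding disjoint_family_on_def A_def using first_passage_unique by blast
  have PB: "1 - \<beta> \<le> prob (B k)" if "k \<le> n" for k
  proof (cases "k = n")
    case True
    then show ?thesis using lam \<beta> by (simp add: B_def prob_space)
  next
    case False
    have "space M - B k = {\<omega>\<in>space M. lam \<le> norm (\<Sum>i\<in>{k..<n}. X i \<omega>)}"
      by (auto simp: B_def)
    then have "prob (space M - B k) \<le> \<beta>"
      using that False tail[of k] by simp
    then show ?thesis using prob_compl[OF B_ev[OF that]] by simp
  qed
  have AB: "prob (A k \<inter> B k) = prob (A k) * prob (B k)" if "k \<le> n" for k
  proof -
    have "A k \<inter> B k = {\<omega>\<in>space M. first_passage (2*lam) (\<lambda>j. norm (\<Sum>i<j. X i \<omega>)) k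
        \<and> norm (\<Sum>i\<in>{k..<n}. X i \<omega>) < lam}"
      by (auto simp: A_def B_def)
    then show ?thesis
      unfolding A_def B_def by (simp only: indep_first_passage_tail[OF ind that])
  qed
  have AB_sub: "A k \<inter> B k \<subseteq> {\<omega>\<in>space M. lam \<le> norm (\<Sum>i<n. X i \<omega>)}" if "k \<le> n" for k
  proof
    fix \<omega> assume \<omega>: "\<omega> \<in> A k \<inter> B k"
    have "(\<Sum>i<n. X i \<omega>) = (\<Sum>i<k. X i \<omega>) + (\<Sum>i\<in>{k..<n}. X i \<omega>)"
      using that by (simp add: lessThan_atLeast0 sum.atLeastLessThan_concat)
    then have "norm (\<Sum>i<k. X i \<omega>) \<le> norm (\<Sum>i<n. X i \<omega>) + norm (\<Sum>i\<in>{k..<n}. X i \<omega>)"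
      by (metis add_diff_cancel_right' norm_triangle_ineq4)
    then show "\<omega> \<in> {\<omega>\<in>space M. lam \<le> norm (\<Sum>i<n. X i \<omega>)}"
      using \<omega> by (auto simp: A_def B_def first_passage_def)
  qed
  have "(1 - \<beta>) * prob (\<Union>k\<le>n. A k) \<le> prob (\<Union>k\<le>n. A k \<inter> B k)"
    using A_ev B_ev disj PB AB by (intro prob_disjoint_union_indep_ge) auto
  also have "\<dots> \<le> prob {\<omega>\<in>space M. lam \<le> norm (\<Sum>i<n. X i \<omega>)}"
    using AB_sub by (intro finite_measure_mono) (auto, measurable)
  finally show ?thesis unfolding union .
qed

section \<open>Maximal displacement of Brownian motion\<close>

abbreviation heat_law :: "real \<Rightarrow> 'a::euclidean_space measure" where
  "heat_law t \<equiv> density lborel (\<lambda>y. ennreal (heat_kernel t y))"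

lemma heat_kernel_scaleR:
  fixes x :: "'a::euclidean_space"
  assumes s: "0 < s"
  shows "heat_kernel s (sqrt s *\<^sub>R x) * sqrt s ^ DIM('a) = heat_kernel 1 x"
proof -
  have e: "exp (- (norm (sqrt s *\<^sub>R x))\<^sup>2 / (4 * s)) = exp (- (norm x)\<^sup>2 / 4)"
    using s by (simp add: power_mult_distrib)
  have p: "(4 * pi * s) powr (- real DIM('a) / 2) = (4 * pi) powr (- real DIM('a) / 2) * s powr (- real DIM('a) / 2)"
    using s by (simp add: powr_mult)
  have q: "sqrt s ^ DIM('a) = s powr (real DIM('a) / 2)"
    using s by (simp add: sqrt_def real_root_pos_pos powr_powr root_powr_inverse flip: powr_realpow)
  have r: "s powr (- real DIM('a) / 2) * s powr (real DIM('a) / 2) = 1"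
    using s by (simp add: powr_add[symmetric])
  show ?thesis unfolding heat_kernel_def e p q
    using r by (simp add: mult.assoc mult.left_commute)
qed

lemma heat_kernel_nonneg: "0 \<le> heat_kernel t y"
  unfolding heat_kernel_def by simp

lemma borel_measurable_heat_kernel[measurable]:
  "heat_kernel t \<in> borel_measurable (borel :: 'a::euclidean_space measure)"
  unfolding heat_kernel_def[abs_def] by measurable

lemma emeasure_heat_law_tail:
  assumes s: "0 < s"
  shows "emeasure (heat_law s) {y::'a::euclidean_space. lam \<le> norm y}
       = emeasure (heat_law 1) {x::'a. lam / sqrt s \<le> norm x}"
proof -
  let ?c = "sqrt s"
  have c: "?c \<noteq> 0" using s by simp
  have "emeasure (heat_law s) {y::'a. lam \<le> norm y}
      = (\<integral>\<^sup>+ y. ennreal (heat_kernel s y) * indicator {y::'a. lam \<le> norm y} y \<partial>lborel)"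
    by (subst emeasure_density) auto
  also have "\<dots> = (\<integral>\<^sup>+ x. ennreal (\<bar>?c\<bar> ^ DIM('a)) *
      (ennreal (heat_kernel s (0 + ?c *\<^sub>R x)) * indicator {y::'a. lam \<le> norm y} (0 + ?c *\<^sub>R x)) \<partial>lborel)"
    by (subst lborel_affine[OF c, of 0]) (simp add: nn_integral_density nn_integral_distr)
  also have "\<dots> = (\<integral>\<^sup>+ x. ennreal (heat_kernel 1 x) * indicator {x::'a. lam / ?c \<le> norm x} x \<partial>lborel)"
  proof (intro nn_integral_cong)
    fix x :: 'a
    have "(lam \<le> norm (?c *\<^sub>R x)) = (lam / ?c \<le> norm x)"
      using s by (simp add: divide_le_eq mult.commute)
    then show "ennreal (\<bar>?c\<bar> ^ DIM('a)) * (ennreal (heat_kernel s (0 + ?c *\<^sub>R x)) *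
        indicator {y::'a. lam \<le> norm y} (0 + ?c *\<^sub>R x))
        = ennreal (heat_kernel 1 x) * indicator {x::'a. lam / ?c \<le> norm x} x"
      using heat_kernel_scaleR[OF s, of x] heat_kernel_nonneg[of s] s
      by (auto simp: indicator_def ennreal_mult'[symmetric] mult.commute)
  qed
  also have "\<dots> = emeasure (heat_law 1) {x::'a. lam / ?c \<le> norm x}"
    by (subst emeasure_density) auto
  finally show ?thesis .
qed

lemma brownian_motion_distr_increment:
  assumes "brownian_motion M W" and "0 \<le> s" and "s < t"
  shows "distr M lborel (\<lambda>\<omega>. W t \<omega> - W s \<omega>) = heat_law (t - s)"
  using assms unfolding brownian_motion_def by blast

lemma brownian_motion_measurable:
  "brownian_motion M W \<Longrightarrow> W t \<in> borel_measurable M"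
  by (simp add: brownian_motion_def)

lemma prob_space_heat_law:
  assumes "brownian_motion M (W :: real \<Rightarrow> 'w \<Rightarrow> 'a::euclidean_space)"
  shows "prob_space (heat_law 1 :: 'a measure)"
proof -
  interpret prob_space M using assms by (simp add: brownian_motion_def)
  have "(\<lambda>\<omega>. W 1 \<omega> - W 0 \<omega>) \<in> measurable M lborel"
    using assms by (simp add: borel_measurable_diff brownian_motion_measurable)
  from prob_space_distr[OF this] show ?thesis
    using brownian_motion_distr_increment[OF assms, of 0 1] by simp
qed

lemma brownian_increment_tail_le:
  assumes bm: "brownian_motion M (W :: real \<Rightarrow> 'w \<Rightarrow> 'a::euclidean_space)"
    and "0 \<le> s" "s < t" "t - s \<le> h" and lam: "0 \<le> lam"
  shows "measure M {\<omega>\<in>space M. lam \<le> norm (W t \<omega> - W s \<omega>)}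
     \<le> measure (heat_law 1) {x::'a. lam / sqrt h \<le> norm x}"
proof -
  interpret prob_space M using bm by (simp add: brownian_motion_def)
  interpret gauss: prob_space "heat_law 1 :: 'a measure"
    by (rule prob_space_heat_law[OF bm])
  have m: "(\<lambda>\<omega>. W t \<omega> - W s \<omega>) \<in> measurable M lborel"
    using bm by (simp add: borel_measurable_diff brownian_motion_measurable)
  have "measure M {\<omega>\<in>space M. lam \<le> norm (W t \<omega> - W s \<omega>)}
      = measure (distr M lborel (\<lambda>\<omega>. W t \<omega> - W s \<omega>)) {y::'a. lam \<le> norm y}"
    by (subst measure_distr[OF m]) (auto intro!: arg_cong[where f="measure M"])
  also have "\<dots> = measure (heat_law 1) {x::'a. lam / sqrt (t - s) \<le> norm x}"
    using assms emeasure_heat_law_tail[of "t - s" lam, where 'a='a]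
    by (simp add: brownian_motion_distr_increment measure_def)
  also have "\<dots> \<le> measure (heat_law 1) {x::'a. lam / sqrt h \<le> norm x}"
  proof (rule gauss.finite_measure_mono)
    have "lam / sqrt h \<le> lam / sqrt (t - s)"
      using assms by (intro divide_left_mono) auto
    then show "{x::'a. lam / sqrt (t - s) \<le> norm x} \<subseteq> {x::'a. lam / sqrt h \<le> norm x}" by auto
  qed simp
  finally show ?thesis .
qed

lemma sum_telescope_atLeastLessThan:
  fixes f :: "nat \<Rightarrow> 'a::ab_group_add"
  assumes "k \<le> n"
  shows "(\<Sum>i\<in>{k..<n}. f (Suc i) - f i) = f n - f k"
  using assms by (induction n) (auto simp: le_Suc_eq)

lemma brownian_dyadic_max_tail:
  assumes bm: "brownian_motion M (W :: real \<Rightarrow> 'w \<Rightarrow> 'a::euclidean_space)"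
    and h: "0 < h" and lam: "0 < lam"
    and \<beta>: "\<beta> = measure (heat_law 1) {x::'a. lam / sqrt h \<le> norm x}" and \<beta>1: "\<beta> < 1"
  shows "measure M {\<omega>\<in>space M. \<exists>k\<le>2^n. 2*lam \<le> norm (W (h * real k / 2^n) \<omega>)} \<le> \<beta> / (1 - \<beta>)"
proof -
  interpret prob_space M using bm by (simp add: brownian_motion_def)
  define t where "t i = h * real i / 2^n" for i
  define X where "X i \<omega> = W (t (Suc i)) \<omega> - W (t i) \<omega>" for i \<omega>
  have t_lt: "t i < t j" if "i < j" for i j
    using h that by (simp add: t_def divide_strict_right_mono)
  have t_nonneg: "0 \<le> t i" for i
    using h by (simp add: t_def)
  have ind: "indep_vars (\<lambda>_. borel) X {..<2^n}"
    using bm t_lt[OF lessI] t_nonneg unfolding brownian_motion_def indep_increments_def X_def by blast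
  have W0: "W 0 \<omega> = 0" if "\<omega> \<in> space M" for \<omega>
    using bm that by (simp add: brownian_motion_def)
  have sum_X: "(\<Sum>i\<in>{k..<m}. X i \<omega>) = W (t m) \<omega> - W (t k) \<omega>" if "k \<le> m" for k m \<omega>
    unfolding X_def using that by (rule sum_telescope_atLeastLessThan)
  have tail: "prob {\<omega>\<in>space M. lam \<le> norm (\<Sum>i\<in>{k..<2^n}. X i \<omega>)} \<le> \<beta>" if "k \<le> 2^n" for k
  proof (cases "k = 2^n")
    case True
    then show ?thesis using lam \<beta> by simp
  next
    case False
    then show ?thesis
      unfolding sum_X[OF that] \<beta> using t_lt[of k "2^n"] that t_nonneg h lam
      by (intro brownian_increment_tail_le[OF bm]) (auto simp: t_def)
  qed
  have "(1 - \<beta>) * prob {\<omega>\<in>space M. \<exists>k\<le>2^n. 2*lam \<le> norm (\<Sum>i<k. X i \<omega>)}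
      \<le> prob {\<omega>\<in>space M. lam \<le> norm (\<Sum>i<2^n. X i \<omega>)}"
    using tail \<beta> by (intro ottaviani[OF ind lam]) auto
  also have "\<dots> \<le> \<beta>"
    using tail[of 0] by (simp add: lessThan_atLeast0)
  finally have "(1 - \<beta>) * prob {\<omega>\<in>space M. \<exists>k\<le>2^n. 2*lam \<le> norm (W (t k) \<omega>)} \<le> \<beta>"
    using sum_X[of 0] W0 by (simp add: lessThan_atLeast0 t_def cong: conj_cong)
  then show ?thesis
    using \<beta>1 by (simp add: le_divide_eq mult.commute t_def)
qed

lemma dyadic_approx:
  fixes h u :: real
  assumes h: "0 < h" and u: "0 \<le> u" "u \<le> h"
  obtains k where "\<And>n. k n \<le> (2::nat)^n" and "(\<lambda>n. h * real (k n) / 2^n) \<longlonglongrightarrow> u"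
proof -
  define k where "k n = nat \<lfloor>u * 2^n / h\<rfloor>" for n :: nat
  have k: "real (k n) = \<lfloor>u * 2^n / h\<rfloor>" for n
    unfolding k_def using h u by simp
  have "real (k n) \<le> 2^n" for n
  proof -
    have "u * 2^n / h \<le> 2^n"
      using h u by (simp add: divide_le_eq mult.commute mult_left_mono)
    then show ?thesis
      unfolding k by linarith
  qed
  then have k_le: "k n \<le> 2^n" for n
    by (metis of_nat_le_iff of_nat_numeral of_nat_power)
  have "u - h / 2^n \<le> h * real (k n) / 2^n \<and> h * real (k n) / 2^n \<le> u" for n
  proof -
    have "u * 2^n / h - 1 \<le> real (k n)" and "real (k n) \<le> u * 2^n / h"
      unfolding k by linarith+
    then have "u * 2^n - h \<le> h * real (k n)" and "h * real (k n) \<le> u * 2^n"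
      using h by (simp_all add: field_simps)
    moreover have "u - h / 2^n = (u * 2^n - h) / 2^n"
      by (simp add: field_simps)
    ultimately show ?thesis
      by (simp add: divide_right_mono pos_divide_le_eq)
  qed
  then have "eventually (\<lambda>n. u - h / 2^n \<le> h * real (k n) / 2^n) sequentially"
    and "eventually (\<lambda>n. h * real (k n) / 2^n \<le> u) sequentially"
    by (simp_all add: always_eventually)
  moreover have "(\<lambda>n. u - h / 2^n) \<longlonglongrightarrow> u"
    using tendsto_diff[OF tendsto_const LIMSEQ_divide_realpow_zero[of 2 h]] by simp
  ultimately have "(\<lambda>n. h * real (k n) / 2^n) \<longlonglongrightarrow> u"
    by (rule tendsto_sandwich[OF _ _ _ tendsto_const])
  with k_le show ?thesis by (rule that)
qed

lemma norm_le_of_dyadic_norm_le: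
  fixes f :: "real \<Rightarrow> 'a::real_normed_vector"
  assumes f: "continuous_on {0..} f" and h: "0 < h" and u: "0 \<le> u" "u \<le> h"
    and dyadic: "\<And>n k. k \<le> (2::nat)^n \<Longrightarrow> norm (f (h * real k / 2^n)) \<le> c"
  shows "norm (f u) \<le> c"
proof -
  obtain k where k: "\<And>n. k n \<le> (2::nat)^n" "(\<lambda>n. h * real (k n) / 2^n) \<longlonglongrightarrow> u"
    using dyadic_approx[OF h u] by blast
  have "(\<lambda>n. f (h * real (k n) / 2^n)) \<longlonglongrightarrow> f u"
    using h u by (intro continuous_on_tendsto_compose[OF f k(2)]) auto
  then have "(\<lambda>n. norm (f (h * real (k n) / 2^n))) \<longlonglongrightarrow> norm (f u)"
    by (rule tendsto_norm)
  moreover have "\<forall>n\<ge>0. norm (f (h * real (k n) / 2^n)) \<le> c"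
    using dyadic k(1) by blast
  ultimately show ?thesis
    by (rule Lim_bounded)
qed

lemma brownian_sup_norm_bound:
  assumes bm: "brownian_motion M (W :: real \<Rightarrow> 'w \<Rightarrow> 'a::euclidean_space)"
    and h: "0 < h" and lam: "0 < lam"
    and \<beta>: "\<beta> = measure (heat_law 1) {x::'a. lam / sqrt h \<le> norm x}" and \<beta>1: "\<beta> < 1"
  obtains G where "G \<in> sets M" and "\<And>\<omega> u. \<omega> \<in> G \<Longrightarrow> 0 \<le> u \<Longrightarrow> u \<le> h \<Longrightarrow> norm (W u \<omega>) \<le> 2*lam"
    and "measure M (space M - G) \<le> \<beta> / (1 - \<beta>)"
proof -
  interpret prob_space M using bm by (simp add: brownian_motion_def)
  define E where "E n = {\<omega>\<in>space M. \<exists>k\<le>(2::nat)^n. 2*lam \<le> norm (W (h * real k / 2^n) \<omega>)}" for n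
  have E_ev: "E n \<in> events" for n
  proof -
    have [measurable]: "W t \<in> borel_measurable M" for t
      using bm by (rule brownian_motion_measurable)
    have "E n = (\<Union>k\<le>(2::nat)^n. {\<omega>\<in>space M. 2*lam \<le> norm (W (h * real k / 2^n) \<omega>)})"
      unfolding E_def by auto
    also have "\<dots> \<in> events"
      by measurable
    finally show ?thesis .
  qed
  have "incseq E"
  proof (rule incseq_SucI)
    show "E n \<subseteq> E (Suc n)" for n
    proof
      fix \<omega> assume "\<omega> \<in> E n"
      then obtain k where "\<omega> \<in> space M" "k \<le> 2^n" "2*lam \<le> norm (W (h * real k / 2^n) \<omega>)"
        unfolding E_def by auto
      moreover have "h * real (2*k) / 2^Suc n = h * real k / 2^n" by simp
      ultimately show "\<omega> \<in> E (Suc n)"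
        unfolding E_def by (metis (mono_tags, lifting) mem_Collect_eq mult_le_mono2 power_Suc)
    qed
  qed
  then have "(\<lambda>n. prob (E n)) \<longlonglongrightarrow> prob (\<Union>n. E n)"
    using E_ev by (intro finite_Lim_measure_incseq) auto
  moreover have "\<forall>n\<ge>0. prob (E n) \<le> \<beta> / (1 - \<beta>)"
    unfolding E_def using brownian_dyadic_max_tail[OF bm h lam \<beta> \<beta>1] by blast
  ultimately have "prob (\<Union>n. E n) \<le> \<beta> / (1 - \<beta>)"
    by (rule Lim_bounded)
  moreover have "norm (W u \<omega>) \<le> 2*lam" if "\<omega> \<in> space M - (\<Union>n. E n)" "0 \<le> u" "u \<le> h" for \<omega> u
  proof (rule norm_le_of_dyadic_norm_le[OF _ h that(2,3)])
    show "continuous_on {0..} (\<lambda>t. W t \<omega>)"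
      using bm that(1) by (simp add: brownian_motion_def)
    show "norm (W (h * real k / 2^n) \<omega>) \<le> 2*lam" if "k \<le> 2^n" for n k
      using \<open>\<omega> \<in> space M - (\<Union>n. E n)\<close> that by (force simp: E_def)
  qed
  moreover have "space M - (space M - (\<Union>n. E n)) = (\<Union>n. E n)"
    unfolding E_def by blast
  ultimately show ?thesis
    using E_ev by (intro that[of "space M - (\<Union>n. E n)"]) auto
qed

section \<open>Complete Bernstein functions and subordinators\<close>

lemma complete_bernstein_ennreal_mono:
  assumes cb: "complete_bernstein f" and xy: "0 < x" "x \<le> y"
  shows "ennreal (f x) \<le> ennreal (f y)"
proof -
  obtain a b m where b: "b \<ge> 0" and cm: "completely_monotone_on {0<..} m"
    and rep: "\<forall>l>0. ennreal (f l) = ennreal a + ennreal (b * l) +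
            (\<integral>\<^sup>+ t\<in>{0<..}. ennreal ((1 - exp (- l * t)) * m t) \<partial>lborel)"
    using cb unfolding complete_bernstein_def by blast
  obtain g where "\<forall>x\<in>{0<..}. g 0 x = m x" and "\<forall>n. \<forall>x\<in>{0<..}. (-1) ^ n * g n x \<ge> (0::real)"
    using cm unfolding completely_monotone_on_def by blast
  then have m_nonneg: "0 \<le> m t" if "0 < t" for t
    using that by (metis greaterThan_iff mult_1 power_0)
  have "(\<integral>\<^sup>+ t\<in>{0<..}. ennreal ((1 - exp (- x * t)) * m t) \<partial>lborel)
      \<le> (\<integral>\<^sup>+ t\<in>{0<..}. ennreal ((1 - exp (- y * t)) * m t) \<partial>lborel)"
  proof (intro nn_integral_mono)
    fix t :: real
    have "(1 - exp (- x * t)) * m t \<le> (1 - exp (- y * t)) * m t" if "0 < t"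
      using that xy m_nonneg[OF that] by (intro mult_right_mono) (auto simp: mult_right_mono)
    then show "ennreal ((1 - exp (- x * t)) * m t) * indicator {0<..} t
       \<le> ennreal ((1 - exp (- y * t)) * m t) * indicator {0<..} t"
      by (simp add: indicator_def ennreal_leI)
  qed
  moreover have "ennreal (b * x) \<le> ennreal (b * y)"
    using b xy by (intro ennreal_leI mult_left_mono) auto
  ultimately show ?thesis
    using rep xy by (simp add: add_mono)
qed

lemma complete_bernstein_ge_one:
  assumes "complete_bernstein f" and "f 1 = 1" and "1 \<le> x"
  shows "1 \<le> f x"
  using complete_bernstein_ennreal_mono[of f 1 x] assms by (simp add: ennreal_le_iff2)

lemma complete_bernstein_mono:
  assumes "complete_bernstein f" and "f 1 = 1" and "1 \<le> x" and "x \<le> y"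
  shows "f x \<le> f y"
  using complete_bernstein_ennreal_mono[of f x y] complete_bernstein_ge_one[of f y] assms by simp

lemma wsc_mult_le:
  assumes "wsc \<phi> a1 a2 d1 d2" and "1 < x" and "1 \<le> q" and "0 < \<phi> x"
  shows "\<phi> (q * x) \<le> a2 * q powr d2 * \<phi> x"
proof -
  have "x \<le> q * x" using assms by simp
  then have "\<phi> (q * x) / \<phi> x \<le> a2 * (q * x / x) powr d2"
    using assms unfolding wsc_def by blast
  then show ?thesis
    using assms by (simp add: divide_le_eq)
qed

lemma complete_bernstein_wsc_le:
  assumes cb: "complete_bernstein \<psi>" and \<psi>1: "\<psi> 1 = 1" and w: "wsc \<psi> b1 b2 g1 g2"
    and "1 \<le> y" "y \<le> x" "x \<le> K * y"
  shows "\<psi> x \<le> max (b2 * K powr g2) (\<psi> K) * \<psi> y"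
proof (cases "y = 1")
  case True
  then have "\<psi> x \<le> \<psi> K"
    using assms by (intro complete_bernstein_mono[OF cb \<psi>1]) auto
  then show ?thesis using True \<psi>1 by simp
next
  case False
  then have y: "1 < y" using assms by simp
  have \<psi>y: "1 \<le> \<psi> y" using complete_bernstein_ge_one[OF cb \<psi>1] y by simp
  have "x / y \<le> K" using assms y by (simp add: divide_le_eq)
  then have "(x / y) powr g2 \<le> K powr g2"
    using w assms y unfolding wsc_def by (intro powr_mono2) auto
  moreover have "\<psi> x / \<psi> y \<le> b2 * (x / y) powr g2" and "0 < b2"
    using w y assms unfolding wsc_def by auto
  ultimately have "\<psi> x \<le> b2 * K powr g2 * \<psi> y"
    using \<psi>y by (simp add: divide_le_eq) (smt (verit) mult_left_mono mult_right_mono)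
  also have "\<dots> \<le> max (b2 * K powr g2) (\<psi> K) * \<psi> y"
    using \<psi>y by (intro mult_right_mono) auto
  finally show ?thesis .
qed

lemma subordinator_nonneg:
  assumes "subordinator M S \<phi>" and "\<omega> \<in> space M" and "0 \<le> t"
  shows "0 \<le> S t \<omega>"
proof -
  have "S 0 \<omega> = 0" and "mono_on {0..} (\<lambda>t. S t \<omega>)"
    using assms by (auto simp: subordinator_def)
  then show ?thesis
    using assms(3) by (metis atLeast_iff mono_onD order_refl)
qed

lemma subordinator_laplace:
  assumes sub: "subordinator M S \<phi>" and "0 \<le> t" and "0 < l"
  shows "(\<integral>\<omega>. exp (- l * S t \<omega>) \<partial>M) = exp (- t * \<phi> l)"
proof -
  have "(\<integral>\<omega>. exp (- l * (S t \<omega> - S 0 \<omega>)) \<partial>M) = exp (- (t - 0) * \<phi> l)"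
    using assms unfolding subordinator_def by blast
  moreover have "(\<integral>\<omega>. exp (- l * (S t \<omega> - S 0 \<omega>)) \<partial>M) = (\<integral>\<omega>. exp (- l * S t \<omega>) \<partial>M)"
    using sub by (intro Bochner_Integration.integral_cong) (auto simp: subordinator_def)
  ultimately show ?thesis
    by simp
qed

lemma of_bool_le_two_mul_one_minus_exp:
  fixes y h :: real
  assumes "0 \<le> y" and "0 < h"
  shows "of_bool (h \<le> y) \<le> 2 * (1 - exp (- (1/h) * y))"
proof (cases "h \<le> y")
  case True
  have "2 \<le> exp (1::real)"
    using exp_ge_add_one_self[of 1] by simp
  then have "exp (-1::real) \<le> 1/2"
    by (simp add: exp_minus field_simps)
  moreover have "exp (- (1/h) * y) \<le> exp (-1)"
    using True assms by (simp add: le_divide_eq)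
  ultimately have "exp (- (1/h) * y) \<le> 1/2"
    by linarith
  then show ?thesis
    using True by simp
qed (use assms in simp)

text \<open>Markov's inequality applied to 1 - exp (- S t / h), whose mean the Laplace exponent gives.\<close>
lemma subordinator_tail_le:
  assumes sub: "subordinator M S \<phi>" and t: "0 \<le> t" and h: "0 < h"
  shows "measure M {\<omega>\<in>space M. h \<le> S t \<omega>} \<le> 2 * t * \<phi> (1 / h)"
proof -
  interpret prob_space M using sub by (simp add: subordinator_def)
  have [measurable]: "S t \<in> borel_measurable M"
    using sub by (simp add: subordinator_def)
  have A: "{\<omega>\<in>space M. h \<le> S t \<omega>} \<in> events"
    by measurable
  have int: "integrable M (\<lambda>\<omega>. exp (- (1/h) * S t \<omega>))"
    using subordinator_nonneg[OF sub _ t] h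
    by (intro integrable_const_bound[where B=1]) (auto intro!: AE_I2)
  have "indicator {\<omega>\<in>space M. h \<le> S t \<omega>} \<omega> \<le> 2 * (1 - exp (- (1/h) * S t \<omega>))"
    if "\<omega> \<in> space M" for \<omega>
    using of_bool_le_two_mul_one_minus_exp[OF subordinator_nonneg[OF sub that t] h] that
    by (simp only: indicator_def mem_Collect_eq simp_thms)
  moreover have "integrable M (\<lambda>\<omega>. 2 * (1 - exp (- (1/h) * S t \<omega>)))"
    using int by simp
  ultimately have "(\<integral>\<omega>. indicator {\<omega>\<in>space M. h \<le> S t \<omega>} \<omega> \<partial>M)
      \<le> (\<integral>\<omega>. 2 * (1 - exp (- (1/h) * S t \<omega>)) \<partial>M)"
    using A by (intro integral_mono) (auto intro!: integrable_real_indicator simp: emeasure_eq_measure)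
  then have "measure M {\<omega>\<in>space M. h \<le> S t \<omega>} \<le> (\<integral>\<omega>. 2 * (1 - exp (- (1/h) * S t \<omega>)) \<partial>M)"
    using A by simp
  also have "\<dots> = 2 * (1 - exp (- t * \<phi> (1/h)))"
    using int subordinator_laplace[OF sub t, of "1/h"] h by (simp add: prob_space)
  also have "\<dots> \<le> 2 * t * \<phi> (1 / h)"
    using exp_ge_add_one_self[of "- t * \<phi> (1/h)"] by simp
  finally show ?thesis .
qed

section \<open>Lower bound for the expected exit time\<close>

lemma exit_time_mono: "U \<subseteq> V \<Longrightarrow> exit_time p U \<le> exit_time p V"
  unfolding exit_time_def
  by (rule INF_superset_mono) (auto split: option.split_asm)

lemma exit_time_killed_ge:
  assumes UD: "U \<subseteq> D" and s: "0 < s"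
    and \<tau>: "mono_on {0..} \<tau>" "\<tau> 0 = 0" "\<tau> t < s"
    and Z: "\<And>v. 0 \<le> v \<Longrightarrow> v < s \<Longrightarrow> Z v \<in> U"
  shows "ennreal t \<le> exit_time (\<lambda>u. killed D Z (\<tau> u)) U"
proof -
  have "ennreal s \<le> exit_time (\<lambda>v. Some (Z v)) D"
    unfolding exit_time_def
  proof (rule INF_greatest)
    fix v assume "v \<in> {v. 0 < v \<and> (case Some (Z v) of None \<Rightarrow> True | Some y \<Rightarrow> y \<notin> D)}"
    then have "\<not> v < s" using Z[of v] UD by auto
    then show "ennreal s \<le> ennreal v" by (simp add: ennreal_leI)
  qed
  then have alive: "killed D Z v = Some (Z v)" if "0 \<le> v" "v < s" for v
  proof -
    have "ennreal v < ennreal s"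
      using that by (simp add: ennreal_less_iff)
    with \<open>ennreal s \<le> _\<close> show ?thesis
      by (simp add: killed_def order_less_le_trans)
  qed
  show ?thesis unfolding exit_time_def
  proof (rule INF_greatest)
    fix u assume u: "u \<in> {u. 0 < u \<and> (case killed D Z (\<tau> u) of None \<Rightarrow> True | Some y \<Rightarrow> y \<notin> U)}"
    show "ennreal t \<le> ennreal u"
    proof (rule ccontr)
      assume "\<not> ?thesis"
      then have "u < t" using ennreal_leI[of t u] by linarith
      then have "0 \<le> \<tau> u" "\<tau> u < s"
        using u \<tau> mono_onD[OF \<tau>(1), of 0 u] mono_onD[OF \<tau>(1), of u t] by auto
      then show False
        using u alive Z by auto
    qed
  qed
qed

lemma Etau_ge_good_event:
  assumes subT: "subordinator M T \<psi>" and UD: "U \<subseteq> D" and s: "0 < s" and E: "E \<in> sets M"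
    and T_lt: "\<And>\<omega>. \<omega> \<in> E \<Longrightarrow> T t \<omega> < s"
    and Z_in: "\<And>\<omega> v. \<omega> \<in> E \<Longrightarrow> 0 \<le> v \<Longrightarrow> v < s \<Longrightarrow> x + W (S v \<omega>) \<omega> \<in> U"
  shows "ennreal t * emeasure M E \<le> Etau M W S T D U x"
proof -
  have "ennreal t * indicator E \<omega> \<le> exit_time (YD W S T D x \<omega>) U" if "\<omega> \<in> space M" for \<omega>
  proof (cases "\<omega> \<in> E")
    case True
    have "mono_on {0..} (\<lambda>u. T u \<omega>)" and "T 0 \<omega> = 0"
      using subT that by (auto simp: subordinator_def)
    then have "ennreal t \<le> exit_time (\<lambda>u. killed D (\<lambda>v. x + W (S v \<omega>) \<omega>) (T u \<omega>)) U"
      using True by (intro exit_time_killed_ge[OF UD s] T_lt Z_in)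
    then show ?thesis
      using True by (simp add: YD_def[abs_def])
  qed simp
  then have "(\<integral>\<^sup>+\<omega>. ennreal t * indicator E \<omega> \<partial>M) \<le> Etau M W S T D U x"
    unfolding Etau_def by (rule nn_integral_mono)
  then show ?thesis
    using E by (simp add: nn_integral_cmult_indicator)
qed

lemma (in prob_space) prob_Int3_ge:
  assumes "A \<in> events" "B \<in> events" "C \<in> events"
  shows "1 - (prob (space M - A) + prob (space M - B) + prob (space M - C)) \<le> prob (A \<inter> B \<inter> C)"
proof -
  have "prob (space M - A \<inter> B \<inter> C) \<le> prob ((space M - A) \<union> (space M - B) \<union> (space M - C))"
    using assms by (intro finite_measure_mono) auto
  also have "\<dots> \<le> prob (space M - A) + prob (space M - B) + prob (space M - C)"
    using assms by (intro order.trans[OF measure_Un_le] add_mono order_refl measure_Un_le) auto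
  finally show ?thesis
    using assms prob_compl[of "A \<inter> B \<inter> C"] by auto
qed

lemma prob_space_norm_tail_small:
  fixes \<mu> :: "'a::real_normed_vector measure"
  assumes "prob_space \<mu>" and sets: "sets \<mu> = sets borel" and "0 < \<epsilon>"
  obtains R where "1 \<le> R" and "measure \<mu> {x. R \<le> norm x} \<le> \<epsilon>"
proof -
  interpret prob_space \<mu> by fact
  define A where "A n = {x::'a. real n \<le> norm x}" for n :: nat
  have A_ev: "range A \<subseteq> events"
    unfolding A_def sets by auto
  have "x \<notin> (\<Inter>n. A n)" for x
  proof -
    obtain n :: nat where "norm x < real n"
      using reals_Archimedean2 by blast
    then show ?thesis
      by (auto simp: A_def not_le)
  qed
  then have "(\<Inter>n. A n) = {}"
    by blast
  moreover have "(\<lambda>n. prob (A n)) \<longlonglongrightarrow> prob (\<Inter>n. A n)"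
    using A_ev by (intro finite_Lim_measure_decseq) (auto simp: A_def decseq_def)
  ultimately have "(\<lambda>n. prob (A n)) \<longlonglongrightarrow> 0"
    by simp
  then have "eventually (\<lambda>n. prob (A n) < \<epsilon>) sequentially"
    using \<open>0 < \<epsilon>\<close> by (rule order_tendstoD)
  then obtain n where n: "prob (A n) < \<epsilon>"
    using eventually_sequentially by auto
  have "prob {x. max 1 (real n) \<le> norm x} \<le> prob (A n)"
    using A_ev by (intro finite_measure_mono) (auto simp: A_def)
  with n show ?thesis
    by (intro that[of "max 1 (real n)"]) auto
qed

lemma Etau_ge_inverse_psi_phi:
  assumes bm: "brownian_motion M (W :: real \<Rightarrow> 'w \<Rightarrow> 'a::euclidean_space)"
    and subS: "subordinator M S \<phi>" and subT: "subordinator M T \<psi>"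
    and lam: "0 < lam" and h: "0 < h"
    and gauss: "measure (heat_law 1) {y::'a. lam / sqrt h \<le> norm y} \<le> 1/10"
    and \<phi>_pos: "0 < \<phi> (1/h)" and \<psi>_pos: "0 < \<psi> (20 * \<phi> (1/h))"
    and U: "cball x (2*lam) \<subseteq> U" and UD: "U \<subseteq> D"
  shows "ennreal (1 / (40 * \<psi> (20 * \<phi> (1/h)))) \<le> Etau M W S T D U x"
proof -
  interpret prob_space M using bm by (simp add: brownian_motion_def)
  define \<beta> where "\<beta> = measure (heat_law 1) {y::'a. lam / sqrt h \<le> norm y}"
  have "0 \<le> \<beta>" "\<beta> \<le> 1/10"
    using gauss by (simp_all add: \<beta>_def)
  then have "\<beta> < 1" and \<beta>9: "\<beta> / (1 - \<beta>) \<le> 1/9"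
    by (simp_all add: divide_le_eq)
  obtain G where G: "G \<in> events" "\<And>\<omega> u. \<omega> \<in> G \<Longrightarrow> 0 \<le> u \<Longrightarrow> u \<le> h \<Longrightarrow> norm (W u \<omega>) \<le> 2*lam"
    and G_compl: "prob (space M - G) \<le> \<beta> / (1 - \<beta>)"
    using brownian_sup_norm_bound[OF bm h lam \<beta>_def \<open>\<beta> < 1\<close>] by blast
  define s where "s = 1 / (20 * \<phi> (1/h))"
  have s: "0 < s" "1 / s = 20 * \<phi> (1/h)"
    using \<phi>_pos by (simp_all add: s_def)
  define t where "t = 1 / (20 * \<psi> (1/s))"
  have t: "0 < t"
    using \<psi>_pos by (simp add: t_def s)
  have [measurable]: "S s \<in> borel_measurable M" "T t \<in> borel_measurable M"
    using subS subT by (simp_all add: subordinator_def)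
  define E where "E = G \<inter> {\<omega>\<in>space M. T t \<omega> < s} \<inter> {\<omega>\<in>space M. S s \<omega> < h}"
  have "space M - {\<omega>\<in>space M. T t \<omega> < s} = {\<omega>\<in>space M. s \<le> T t \<omega>}"
    and "space M - {\<omega>\<in>space M. S s \<omega> < h} = {\<omega>\<in>space M. h \<le> S s \<omega>}"
    by auto
  then have "prob (space M - {\<omega>\<in>space M. T t \<omega> < s}) \<le> 2 * t * \<psi> (1/s)"
    and "prob (space M - {\<omega>\<in>space M. S s \<omega> < h}) \<le> 2 * s * \<phi> (1/h)"
    using subordinator_tail_le[OF subT less_imp_le[OF t] s(1)]
      subordinator_tail_le[OF subS less_imp_le[OF s(1)] h] by simp_all
  moreover have "1 - (prob (space M - G) + prob (space M - {\<omega>\<in>space M. T t \<omega> < s})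
      + prob (space M - {\<omega>\<in>space M. S s \<omega> < h})) \<le> prob E"
    unfolding E_def using G(1) by (intro prob_Int3_ge; measurable)
  ultimately have "1 - (1/9 + 2 * t * \<psi> (1/s) + 2 * s * \<phi> (1/h)) \<le> prob E"
    using G_compl \<beta>9 by linarith
  then have PE: "1/2 \<le> prob E"
    using \<phi>_pos \<psi>_pos by (simp add: s_def t_def s(2))
  have "ennreal t * emeasure M E \<le> Etau M W S T D U x"
  proof (rule Etau_ge_good_event[OF subT UD s(1)])
    show "E \<in> events" unfolding E_def using G(1) by measurable
    show "T t \<omega> < s" if "\<omega> \<in> E" for \<omega> using that by (simp add: E_def)
    fix \<omega> v assume \<omega>: "\<omega> \<in> E" and v: "0 \<le> v" "v < s"
    have "\<omega> \<in> space M" "S s \<omega> < h"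
      using \<omega> G(1) sets.sets_into_space by (auto simp: E_def)
    moreover have "mono_on {0..} (\<lambda>u. S u \<omega>)"
      using subS \<open>\<omega> \<in> space M\<close> by (simp add: subordinator_def)
    ultimately have "0 \<le> S v \<omega>" "S v \<omega> \<le> h"
      using subordinator_nonneg[OF subS _ v(1)] mono_onD[of "{0..}" "\<lambda>u. S u \<omega>" v s] v by auto
    then have "norm (W (S v \<omega>) \<omega>) \<le> 2*lam"
      using G(2) \<omega> by (simp add: E_def)
    then show "x + W (S v \<omega>) \<omega> \<in> U"
      using U by (auto simp: dist_norm)
  qed
  moreover have "1 / (40 * \<psi> (20 * \<phi> (1/h))) \<le> t * prob E"
  proof -
    have "1 / (40 * \<psi> (20 * \<phi> (1/h))) = t * (1/2)"
      by (simp add: t_def s(2))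
    also have "\<dots> \<le> t * prob E"
      using PE t by (intro mult_left_mono) auto
    finally show ?thesis .
  qed
  then have "ennreal (1 / (40 * \<psi> (20 * \<phi> (1/h)))) \<le> ennreal t * emeasure M E"
    using t by (simp add: emeasure_eq_measure ennreal_mult'[symmetric] ennreal_leI)
  ultimately show ?thesis
    by (rule order.trans[rotated])
qed

lemma complete_bernstein_wsc_compose_le:
  assumes cb\<phi>: "complete_bernstein \<phi>" and \<phi>1: "\<phi> 1 = 1" and w\<phi>: "wsc \<phi> a1 a2 d1 d2"
    and cb\<psi>: "complete_bernstein \<psi>" and \<psi>1: "\<psi> 1 = 1" and w\<psi>: "wsc \<psi> b1 b2 g1 g2"
    and x: "1 < x" and q: "1 \<le> q" and c: "1 \<le> c"
  shows "\<psi> (c * \<phi> (q * x)) \<le> max (b2 * (c * a2 * q powr d2) powr g2) (\<psi> (c * a2 * q powr d2)) * \<psi> (\<phi> x)"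
proof (rule complete_bernstein_wsc_le[OF cb\<psi> \<psi>1 w\<psi>])
  have \<phi>x: "1 \<le> \<phi> x"
    using complete_bernstein_ge_one[OF cb\<phi> \<phi>1] x by simp
  then show "1 \<le> \<phi> x" .
  have "\<phi> x \<le> \<phi> (q * x)"
    using x q by (intro complete_bernstein_mono[OF cb\<phi> \<phi>1]) auto
  then show "\<phi> x \<le> c * \<phi> (q * x)"
    using c \<phi>x by (smt (verit) mult_le_cancel_right1)
  have "\<phi> (q * x) \<le> a2 * q powr d2 * \<phi> x"
    using x q \<phi>x by (intro wsc_mult_le[OF w\<phi>]) auto
  then show "c * \<phi> (q * x) \<le> c * a2 * q powr d2 * \<phi> x"
    using c by (simp add: mult.assoc)
qed

lemma Etau_small_ball_ge:
  assumes setting: "sub_setting M (W :: real \<Rightarrow> 'w \<Rightarrow> 'a::euclidean_space) S T \<phi> \<psi>"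
    and cb\<phi>: "complete_bernstein \<phi>" and \<phi>1: "\<phi> 1 = 1" and w\<phi>: "wsc \<phi> a1 a2 d1 d2"
    and a: "0 < a" "a \<le> 1/4"
  obtains C where "0 < C" and "\<And>x0 r x. 0 < r \<Longrightarrow> r < 1 \<Longrightarrow> ball x0 r \<subseteq> D \<Longrightarrow> x \<in> ball x0 (a * r) \<Longrightarrow>
      ennreal (C / \<psi> (inverse (Phi \<phi> r))) \<le> Etau M W S T D (ball x0 (4 * a * r)) x"
proof -
  have bm: "brownian_motion M W" and subS: "subordinator M S \<phi>" and subT: "subordinator M T \<psi>"
    and cb\<psi>: "complete_bernstein \<psi>" and \<psi>1: "\<psi> 1 = 1"
    using setting by (auto simp: sub_setting_def)
  obtain b1 b2 g1 g2 where w\<psi>: "wsc \<psi> b1 b2 g1 g2"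
    using setting by (auto simp: sub_setting_def)
  have "sets (heat_law 1 :: 'a measure) = sets borel"
    by simp
  then obtain R where R: "1 \<le> R" "measure (heat_law 1) {y::'a. R \<le> norm y} \<le> 1/10"
    by (rule prob_space_norm_tail_small[OF prob_space_heat_law[OF bm], of "1/10"]) auto
  define q where "q = (R / a)^2"
  have q: "1 \<le> q"
    using R a by (simp add: q_def one_le_power)
  define L where "L = max (b2 * (20 * a2 * q powr d2) powr g2) (\<psi> (20 * a2 * q powr d2))"
  have "0 < L"
    using w\<phi> w\<psi> q by (simp add: L_def wsc_def less_max_iff_disj)
  moreover
  have "ennreal (1 / (40 * L) / \<psi> (inverse (Phi \<phi> r))) \<le> Etau M W S T D (ball x0 (4 * a * r)) x"
    if r: "0 < r" "r < 1" and rD: "ball x0 r \<subseteq> D" and x: "x \<in> ball x0 (a * r)" for x0 r x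
  proof -
    define h where "h = (a * r / R)^2"
    have h_pos: "0 < h"
      using a r R by (simp add: h_def)
    have h_inv: "1 / h = q * r powr (-2)"
      unfolding h_def q_def using a r R by (simp add: powr_minus powr_realpow field_simps)
    have "sqrt h = a * r / R"
      unfolding h_def real_sqrt_abs using a r R by simp
    then have hR: "a * r / sqrt h = R"
      using a r R by simp
    have r2: "1 < r powr (-2)"
      using r by (simp add: powr_minus powr_realpow one_less_inverse_iff power_less_one_iff)
    then have "1 \<le> 1 / h"
      using q mult_mono[of 1 q 1 "r powr (-2)"] by (simp add: h_inv)
    then have \<phi>h: "1 \<le> \<phi> (1/h)"
      by (rule complete_bernstein_ge_one[OF cb\<phi> \<phi>1])
    then have \<psi>h: "1 \<le> \<psi> (20 * \<phi> (1/h))"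
      by (intro complete_bernstein_ge_one[OF cb\<psi> \<psi>1]) simp
    have "cball x (2 * (a * r)) \<subseteq> ball x0 (4 * a * r)"
      using x mult_pos_pos[OF a(1) r(1)]
      by (simp add: cball_subset_ball_iff dist_commute mult.assoc del: zero_less_mult_iff)
    moreover have "ball x0 (4 * a * r) \<subseteq> D"
      using a r by (intro order.trans[OF subset_ball rD, of "4 * a * r"]) simp
    ultimately have "ennreal (1 / (40 * \<psi> (20 * \<phi> (1/h)))) \<le> Etau M W S T D (ball x0 (4 * a * r)) x"
      using a r h_pos hR \<phi>h \<psi>h R by (intro Etau_ge_inverse_psi_phi[OF bm subS subT]) auto
    moreover have "\<psi> (20 * \<phi> (1/h)) \<le> L * \<psi> (\<phi> (r powr (-2)))"
      unfolding h_inv L_def using q r2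
      by (intro complete_bernstein_wsc_compose_le[OF cb\<phi> \<phi>1 w\<phi> cb\<psi> \<psi>1 w\<psi>]) auto
    then have "1 / (40 * L) / \<psi> (inverse (Phi \<phi> r)) \<le> 1 / (40 * \<psi> (20 * \<phi> (1/h)))"
      using \<psi>h \<open>0 < L\<close> by (simp add: Phi_def divide_simps)
    ultimately show ?thesis
      by (meson ennreal_leI order.trans)
  qed
  ultimately show ?thesis
    by (intro that[of "1 / (40 * L)"]) auto
qed

theorem lemma4p6:
  fixes \<phi> :: "real \<Rightarrow> real"
  assumes "DIM('a::euclidean_space) \<ge> 2"
    and "complete_bernstein \<phi>" and "\<phi> 1 = 1"
    and "\<exists>a1 a2 d1 d2. wsc \<phi> a1 a2 d1 d2"
  shows "\<exists>a. 0 < a \<and> a \<le> 2 powr (-6) \<and>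
    (\<forall>(M::'w measure) (W::real \<Rightarrow> 'w \<Rightarrow> 'a) S T \<psi> D \<kappa>.
       sub_setting M W S T \<phi> \<psi> \<and> bounded D \<and> open D \<and> kappa_fat \<kappa> D \<longrightarrow>
       (\<exists>C>0. \<forall>x0\<in>D. \<forall>r. 0 < r \<and> r < 1 \<and> ball x0 r \<subseteq> D \<longrightarrow>
          (\<forall>x\<in>ball x0 (a * r).
             Etau M W S T D (ball x0 (4 * a * r)) x \<le> Etau M W S T D (ball x0 r) x \<and>
             ennreal (C / \<psi> (inverse (Phi \<phi> r))) \<le> Etau M W S T D (ball x0 (4 * a * r)) x)))"
proof -
  obtain a1 a2 d1 d2 where w\<phi>: "wsc \<phi> a1 a2 d1 d2"
    using assms(4) by blast
  have a: "0 < (2::real) powr (-6)" "(2::real) powr (-6) \<le> 1/4"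
    by (simp_all add: powr_minus powr_realpow)
  show ?thesis
  proof (rule exI[of _ "2 powr (-6)"], intro conjI allI impI a(1) order_refl)
    fix M :: "'w measure" and W :: "real \<Rightarrow> 'w \<Rightarrow> 'a" and S T \<psi> and D :: "'a set" and \<kappa> :: real
    assume "sub_setting M W S T \<phi> \<psi> \<and> bounded D \<and> open D \<and> kappa_fat \<kappa> D"
    then obtain C where "0 < C" and C: "\<And>x0 r x. 0 < r \<Longrightarrow> r < 1 \<Longrightarrow> ball x0 r \<subseteq> D \<Longrightarrow>
        x \<in> ball x0 (2 powr (-6) * r) \<Longrightarrow>
        ennreal (C / \<psi> (inverse (Phi \<phi> r))) \<le> Etau M W S T D (ball x0 (4 * 2 powr (-6) * r)) x"
      using Etau_small_ball_ge[OF _ assms(2,3) w\<phi> a] by blast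
    have "Etau M W S T D (ball x0 (4 * 2 powr (-6) * r)) x \<le> Etau M W S T D (ball x0 r) x"
      if "0 < r" for x0 x r
      unfolding Etau_def using a that by (intro nn_integral_mono exit_time_mono subset_ball) simp
    with \<open>0 < C\<close> C show "\<exists>C>0. \<forall>x0\<in>D. \<forall>r. 0 < r \<and> r < 1 \<and> ball x0 r \<subseteq> D \<longrightarrow>
        (\<forall>x\<in>ball x0 (2 powr (-6) * r).
           Etau M W S T D (ball x0 (4 * 2 powr (-6) * r)) x \<le> Etau M W S T D (ball x0 r) x \<and>
           ennreal (C / \<psi> (inverse (Phi \<phi> r))) \<le> Etau M W S T D (ball x0 (4 * 2 powr (-6) * r)) x)"
      by blast
  qed
qed

end
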